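(* Let $n\ge1$ and $a,b>0$. Define $X_1=\frac{\arctan\sqrt{b/a}}{\sqrt{ab}}$, $X_2=\frac{1}{2a(a+b)}$, and $X_n=\left(\frac{\partial}{\partial a}\right)^{m-1}\left(\frac{\partial}{\partial b}\right)^{m-1}X_1$ if $n=2m-1$ ($m\ge1$), $X_n=\left(\frac{\partial}{\partial a}\right)^{m-2}\left(\frac{\partial}{\partial b}\right)^{m-2}X_2$ if $n=2m-2$ ($m\ge2$). Then: if $n=2m-1$, $$X_n=\frac{(2m-2)!\,(2m-3)!!}{(2m-2)!!\,(2^2ab)^{m-1}}\left\{\frac{\arctan\sqrt{b/a}}{\sqrt{ab}}+\sum_{k=1}^{m-1}\frac{(2k-2)!!\,(b-a)(2^2ab)^{k-1}}{(2k-1)!!\,(a+b)^{2k}}\right\};$$ if $n=2m-2$, $$X_n=\frac{(2m-3)!\,(2m-4)!!}{(2m-3)!!\,(2^2ab)^{m-2}}\left\{\frac{1}{2a(a+b)}+\sum_{k=2}^{m-1}\frac{(2k-3)!!\,(b-a)(2^2ab)^{k-2}}{(2k-2)!!\,(a+b)^{2k-1}}\right\}.$$ Consequently, for $x=(x_1,\dots,x_{n+1})\in\mathbf{R}^{n+1}$ with $r=\sqrt{\sum_{j=1}^{n+1}x_j^2}$ and $r>|x_{n+1}|$, the function $$f(r,x_{n+1})=\int_0^1\frac{2^nt^{n-1}}{\{r-x_{n+1}+t^2(r+x_{n+1})\}^n}\,dt$$ is given as follows: if $n=2m-1$, $$f(r,x_{n+1})=\frac{(2m-3)!!}{(2m-2)!!\,(r^2-x_{2m}^2)^{m-1}}\left\{\frac{2\arctan\sqrt{\frac{r+x_{2m}}{r-x_{2m}}}}{(r^2-x_{2m}^2)^{1/2}}+\sum_{k=1}^{m-1}\frac{(2k-2)!!\,x_{2m}(r^2-x_{2m}^2)^{k-1}}{(2k-1)!!\,r^{2k}}\right\};$$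 if $n=2m-2$, $$f(r,x_{n+1})=\frac{(2m-4)!!}{(2m-3)!!\,(r^2-x_{2m-1}^2)^{m-1}}\left\{1+\sum_{k=1}^{m-1}\frac{(2k-3)!!\,x_{2m-1}(r^2-x_{2m-1}^2)^{k-1}}{(2k-2)!!\,r^{2k-1}}\right\}.$$
   Context: Double factorials use the conventions $(-1)!!=0!!=1$. Empty sums are zero. Here $a=r-x_{n+1}$, $b=r+x_{n+1}$ relate the two parts of the statement, and $f(r,x_{n+1})=\frac{2^n}{(n-1)!}X_n$ evaluated at these $a,b$. *)

theory Defs
  imports "HOL-Analysis.Analysis"
begin

text \<open>Double factorial on integers, with the conventions (-1)!! = 0!! = 1
  (arguments below -1 never occur in the statement).\<close>
function dfact :: "int \<Rightarrow> nat" where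
  "dfact k = (if k \<le> 0 then 1 else nat k * dfact (k - 2))"
  by auto
termination by (relation "Wellfounded.measure nat") auto

definition pda :: "(real \<Rightarrow> real \<Rightarrow> real) \<Rightarrow> real \<Rightarrow> real \<Rightarrow> real" where
  "pda F = (\<lambda>a b. deriv (\<lambda>s. F s b) a)"

definition pdb :: "(real \<Rightarrow> real \<Rightarrow> real) \<Rightarrow> real \<Rightarrow> real \<Rightarrow> real" where
  "pdb F = (\<lambda>a b. deriv (\<lambda>s. F a s) b)"

definition X1 :: "real \<Rightarrow> real \<Rightarrow> real" where
  "X1 a b = arctan (sqrt (b / a)) / sqrt (a * b)"

definition X2 :: "real \<Rightarrow> real \<Rightarrow> real" where
  "X2 a b = 1 / (2 * a * (a + b))"

definition Xn :: "nat \<Rightarrow> real \<Rightarrow> real \<Rightarrow> real" where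
  "Xn n = (if odd n
     then (pda ^^ ((n + 1) div 2 - 1)) ((pdb ^^ ((n + 1) div 2 - 1)) X1)
     else (pda ^^ (n div 2 - 1)) ((pdb ^^ (n div 2 - 1)) X2))"

definition fint :: "nat \<Rightarrow> real \<Rightarrow> real \<Rightarrow> real" where
  "fint n r y = integral {0..1}
     (\<lambda>t. 2 ^ n * t ^ (n - 1) / (r - y + t\<^sup>2 * (r + y)) ^ n)"

end

(* Differentiating under the integral sign shows that X_n = (n-1)! J(n-1, n), where
   J(p, q) = integral over [0,1] of t^p / (a + t^2 b)^q: indeed X_1 = J(0, 1) and X_2 = J(1, 2),
   d/da maps c J(p, q) to -q c J(p, q+1), and d/db maps it to -q c J(p+2, q+1).
   Integrating the derivative of t^(k+1) (b t^2 - a) / (a + t^2 b)^(k+2) over [0,1] yields the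
   two-step recurrence
     4ab (k+2) J(k+2, k+3) = (k+1) J(k, k+1) + (b - a) / (a + b)^(k+2),
   which unrolls from J(0, 1) and J(1, 2) into the double-factorial closed forms.
   Finally f(r, y) = 2^n J(n-1, n)(r - y, r + y) = 2^n / (n-1)! X_n(r - y, r + y), and the
   substitution ab = r^2 - y^2, a + b = 2r, b - a = 2y turns the formulas for X_n into those for f. *)

theory Submission
  imports Defs
begin

declare dfact.simps[simp del]

lemma has_real_derivative_divide_power:
  assumes g: "(g has_real_derivative g') (at x within S)" and g_pos: "g x > 0"
  shows "((\<lambda>s. c / g s ^ q) has_real_derivative - real q * c * g' / g x ^ Suc q) (at x within S)"
proof -
  have "((\<lambda>s. c / g s ^ q) has_real_derivative - (c * (real q * g x ^ (q - 1) * g')) / (g x ^ q * g x ^ q)) (at x within S)"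
    using g g_pos by (intro derivative_eq_intros refl) auto
  moreover have "- (c * (real q * g x ^ (q - 1) * g')) / (g x ^ q * g x ^ q) = - real q * c * g' / g x ^ Suc q"
    using g_pos by (cases q) (simp_all add: field_simps power_add[symmetric])
  ultimately show ?thesis by simp
qed

lemma has_real_derivative_integral_divide_power:
  fixes f u w :: "real \<Rightarrow> real" and l h :: real
  assumes cont: "continuous_on {l..h} f" "continuous_on {l..h} u" "continuous_on {l..h} w"
    and pos: "\<And>s t. s > 0 \<Longrightarrow> t \<in> {l..h} \<Longrightarrow> u t + s * w t > 0" and "x > 0"
  shows "((\<lambda>s. integral {l..h} (\<lambda>t. f t / (u t + s * w t) ^ q)) has_real_derivative
           - real q * integral {l..h} (\<lambda>t. f t * w t / (u t + x * w t) ^ Suc q)) (at x)"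
proof -
  let ?U = "{0<..} :: real set"
  have nz: "u t + s * w t \<noteq> 0" if "s > 0" "t \<in> {l..h}" for s t
    using pos[OF that] by simp
  have cont_snd: "continuous_on (?U \<times> {l..h}) (\<lambda>z. g (snd z))" if "continuous_on {l..h} g" for g :: "real \<Rightarrow> real"
    by (rule continuous_on_compose2[OF that continuous_on_snd]) auto
  have "at x within ?U = at x"
    using \<open>x > 0\<close> by (simp add: at_within_open[of x ?U])
  moreover have "((\<lambda>s. integral (cbox l h) (\<lambda>t. f t / (u t + s * w t) ^ q)) has_real_derivative
      integral (cbox l h) (\<lambda>t. - real q * (f t * w t / (u t + x * w t) ^ Suc q))) (at x within ?U)"
  proof (rule leibniz_rule_field_derivative)
    fix s t :: real assume "s \<in> ?U" "t \<in> cbox l h"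
    then have "((\<lambda>s. f t / (u t + s * w t) ^ q) has_real_derivative - real q * f t * w t / (u t + s * w t) ^ Suc q) (at s within ?U)"
      using pos by (intro has_real_derivative_divide_power) (auto intro!: derivative_eq_intros)
    then show "((\<lambda>s. f t / (u t + s * w t) ^ q) has_real_derivative - real q * (f t * w t / (u t + s * w t) ^ Suc q)) (at s within ?U)"
      by (simp add: mult.assoc)
  next
    fix s :: real assume "s \<in> ?U"
    then show "(\<lambda>t. f t / (u t + s * w t) ^ q) integrable_on cbox l h"
      using cont nz unfolding cbox_interval by (intro integrable_continuous_interval continuous_intros) auto
  next
    show "continuous_on (?U \<times> cbox l h) (\<lambda>(s, t). - real q * (f t * w t / (u t + s * w t) ^ Suc q))"
      using cont_snd[OF cont(1)] cont_snd[OF cont(2)] cont_snd[OF cont(3)] nz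
      unfolding case_prod_beta cbox_interval by (intro continuous_intros) (auto simp: mem_Times_iff)
  qed (use \<open>x > 0\<close> in auto)
  ultimately show ?thesis
    by (simp only: cbox_interval integral_mult_right)
qed

definition Jint :: "nat \<Rightarrow> nat \<Rightarrow> real \<Rightarrow> real \<Rightarrow> real" where
  "Jint p q a b = integral {0..1} (\<lambda>t. t ^ p / (a + t\<^sup>2 * b) ^ q)"

lemma quadratic_denominator_pos: "a > 0 \<Longrightarrow> b \<ge> 0 \<Longrightarrow> a + t\<^sup>2 * b > (0::real)"
  by (simp add: add_pos_nonneg)

lemma Jint_integrand_integrable:
  assumes "a > 0" "b \<ge> 0"
  shows "(\<lambda>t. t ^ p / (a + t\<^sup>2 * b) ^ q) integrable_on {0..1::real}"
proof -
  have "a + t\<^sup>2 * b \<noteq> 0" for t :: real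
    using quadratic_denominator_pos[OF assms] by (metis less_irrefl)
  then show ?thesis
    by (intro integrable_continuous_interval continuous_intros) auto
qed

lemma Jint_has_derivative_a:
  assumes "a > 0" "b > 0"
  shows "((\<lambda>s. Jint p q s b) has_real_derivative - real q * Jint p (Suc q) a b) (at a)"
proof -
  have "((\<lambda>s. integral {0..1} (\<lambda>t. t ^ p / (t\<^sup>2 * b + s * 1) ^ q)) has_real_derivative
      - real q * integral {0..1} (\<lambda>t. t ^ p * 1 / (t\<^sup>2 * b + a * 1) ^ Suc q)) (at a)"
    using assms by (intro has_real_derivative_integral_divide_power continuous_intros) (auto intro!: add_nonneg_pos)
  moreover have "t\<^sup>2 * b + s * 1 = s + t\<^sup>2 * b" for s t :: real
    by simp
  ultimately show ?thesis
    by (simp only: Jint_def mult_1_right)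
qed

lemma Jint_has_derivative_b:
  assumes "a > 0" "b > 0"
  shows "((\<lambda>s. Jint p q a s) has_real_derivative - real q * Jint (p + 2) (Suc q) a b) (at b)"
proof -
  have "((\<lambda>s. integral {0..1} (\<lambda>t. t ^ p / (a + s * t\<^sup>2) ^ q)) has_real_derivative
      - real q * integral {0..1} (\<lambda>t. t ^ p * t\<^sup>2 / (a + b * t\<^sup>2) ^ Suc q)) (at b)"
    using assms by (intro has_real_derivative_integral_divide_power continuous_intros) (auto simp: add_pos_nonneg)
  moreover have "s * t\<^sup>2 = t\<^sup>2 * s" "t ^ p * t\<^sup>2 = t ^ (p + 2)" for s t :: real
    by (simp_all add: power_add power2_eq_square)
  ultimately show ?thesis
    by (simp only: Jint_def)
qed

lemma pda_Jint:
  assumes F: "\<And>a b. a > 0 \<Longrightarrow> b > 0 \<Longrightarrow> F a b = c * Jint p q a b" and "a > 0" "b > 0"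
  shows "pda F a b = - c * real q * Jint p (Suc q) a b"
proof -
  have "eventually (\<lambda>s. s \<in> {0<..}) (nhds a)"
    using \<open>a > 0\<close> by (intro eventually_nhds_in_open) auto
  then have ev: "eventually (\<lambda>s. F s b = c * Jint p q s b) (nhds a)"
    by (rule eventually_mono) (simp add: F \<open>b > 0\<close>)
  have "((\<lambda>s. c * Jint p q s b) has_real_derivative c * (- real q * Jint p (Suc q) a b)) (at a)"
    using assms(2,3) by (intro DERIV_cmult Jint_has_derivative_a)
  then have "((\<lambda>s. F s b) has_real_derivative c * (- real q * Jint p (Suc q) a b)) (at a)"
    by (subst DERIV_cong_ev[OF refl ev refl])
  then show ?thesis
    by (simp add: pda_def DERIV_imp_deriv)
qed

lemma pdb_Jint:
  assumes F: "\<And>a b. a > 0 \<Longrightarrow> b > 0 \<Longrightarrow> F a b = c * Jint p q a b" and "a > 0" "b > 0"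
  shows "pdb F a b = - c * real q * Jint (p + 2) (Suc q) a b"
proof -
  have "eventually (\<lambda>s. s \<in> {0<..}) (nhds b)"
    using \<open>b > 0\<close> by (intro eventually_nhds_in_open) auto
  then have ev: "eventually (\<lambda>s. F a s = c * Jint p q a s) (nhds b)"
    by (rule eventually_mono) (simp add: F \<open>a > 0\<close>)
  have "((\<lambda>s. c * Jint p q a s) has_real_derivative c * (- real q * Jint (p + 2) (Suc q) a b)) (at b)"
    using assms(2,3) by (intro DERIV_cmult Jint_has_derivative_b)
  then have "((\<lambda>s. F a s) has_real_derivative c * (- real q * Jint (p + 2) (Suc q) a b)) (at b)"
    by (subst DERIV_cong_ev[OF refl ev refl])
  then show ?thesis
    by (simp add: pdb_def DERIV_imp_deriv)
qed

lemma funpow_Jint: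
  assumes step: "\<And>F c p q a b. (\<And>a b. a > 0 \<Longrightarrow> b > 0 \<Longrightarrow> F a b = c * Jint p q a b) \<Longrightarrow>
      a > 0 \<Longrightarrow> b > 0 \<Longrightarrow> D F a b = - c * real q * Jint (p + d) (Suc q) a b"
    and F: "\<And>a b. a > 0 \<Longrightarrow> b > 0 \<Longrightarrow> F a b = c * Jint p q a b"
    and "a > 0" "b > 0"
  shows "(D ^^ j) F a b = c * (-1) ^ j * pochhammer (real q) j * Jint (p + d * j) (q + j) a b"
  using \<open>a > 0\<close> \<open>b > 0\<close>
proof (induction j arbitrary: a b)
  case 0
  then show ?case by (simp add: F)
next
  case (Suc j)
  have "(D ^^ Suc j) F a b = - (c * (-1) ^ j * pochhammer (real q) j) * real (q + j) * Jint (p + d * j + d) (Suc (q + j)) a b"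
    using Suc by (simp only: funpow.simps comp_apply) (rule step)
  also have "\<dots> = c * (-1) ^ Suc j * pochhammer (real q) (Suc j) * Jint (p + d * Suc j) (q + Suc j) a b"
    by (simp add: pochhammer_Suc ac_simps)
  finally show ?case .
qed

lemma mixed_partials_Jint:
  assumes X: "\<And>a b. a > 0 \<Longrightarrow> b > 0 \<Longrightarrow> X a b = Jint p q a b" and "a > 0" "b > 0"
  shows "(pda ^^ k) ((pdb ^^ k) X) a b = pochhammer (real q) (2 * k) * Jint (p + 2 * k) (q + 2 * k) a b"
proof -
  have "(pdb ^^ k) X a b = (-1) ^ k * pochhammer (real q) k * Jint (p + 2 * k) (q + k) a b"
    if "a > 0" "b > 0" for a b
    using funpow_Jint[where D = pdb and c = 1, OF pdb_Jint] X that by simp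
  then have "(pda ^^ k) ((pdb ^^ k) X) a b
      = (-1) ^ k * pochhammer (real q) k * (-1) ^ k * pochhammer (real q + real k) k * Jint (p + 2 * k) (q + k + k) a b"
    using funpow_Jint[where D = pda and d = 0, OF pda_Jint] assms(2,3) by simp
  also have "\<dots> = pochhammer (real q) (k + k) * Jint (p + 2 * k) (q + 2 * k) a b"
    unfolding pochhammer_product' by (simp add: mult_ac add.assoc flip: power_add mult_2)
  finally show ?thesis
    by (simp add: mult_2)
qed

lemma integral_eq_antiderivative_diff:
  fixes a b :: real
  assumes "a \<le> b" and F: "\<And>x. x \<in> {a..b} \<Longrightarrow> (F has_real_derivative f x) (at x)"
  shows "integral {a..b} f = F b - F a"
proof (rule integral_unique, rule fundamental_theorem_of_calculus)
  fix x assume "x \<in> {a..b}"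
  then show "(F has_vector_derivative f x) (at x within {a..b})"
    using F by (simp add: has_real_derivative_iff_has_vector_derivative[symmetric] has_field_derivative_at_within)
qed (use \<open>a \<le> b\<close> in simp)

lemma X1_eq_Jint:
  assumes "a > 0" "b > 0"
  shows "X1 a b = Jint 0 1 a b"
proof -
  let ?c = "sqrt (b / a)"
  have c_sq: "?c\<^sup>2 = b / a"
    using assms by simp
  have "a * b = a\<^sup>2 * (b / a)"
    using assms by (simp add: power2_eq_square)
  then have sqrt_ab: "sqrt (a * b) = a * ?c"
    using assms by (simp only: real_sqrt_mult) simp
  have deriv: "((\<lambda>t. arctan (t * ?c) / sqrt (a * b)) has_real_derivative 1 / (a + x\<^sup>2 * b)) (at x)" for x
  proof -
    have "((\<lambda>t. arctan (t * ?c) / sqrt (a * b)) has_real_derivative inverse (1 + (x * ?c)\<^sup>2) * ?c / sqrt (a * b)) (at x)"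
      by (intro DERIV_cdivide DERIV_chain2[OF DERIV_arctan]) (auto intro!: derivative_eq_intros)
    moreover have "inverse (1 + (x * ?c)\<^sup>2) * ?c / sqrt (a * b) = 1 / (a + x\<^sup>2 * b)"
    proof -
      have denom: "1 + (x * ?c)\<^sup>2 = (a + x\<^sup>2 * b) / a"
        using assms by (simp add: power_mult_distrib c_sq field_simps)
      have quot: "?c / sqrt (a * b) = 1 / a"
        using assms by (simp add: sqrt_ab)
      show ?thesis
        using assms quadratic_denominator_pos[of a b x]
        by (simp only: times_divide_eq_right[symmetric] denom quot) (simp add: field_simps)
    qed
    ultimately show ?thesis by simp
  qed
  have "Jint 0 1 a b = arctan (1 * ?c) / sqrt (a * b) - arctan (0 * ?c) / sqrt (a * b)"
    unfolding Jint_def power_0 power_one_right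
    by (rule integral_eq_antiderivative_diff[where F = "\<lambda>t. arctan (t * ?c) / sqrt (a * b)"]) (use deriv in auto)
  then show ?thesis
    by (simp add: X1_def)
qed

lemma X2_eq_Jint:
  assumes "a > 0" "b > 0"
  shows "X2 a b = Jint 1 2 a b"
proof -
  have deriv: "((\<lambda>t. - 1 / (2 * b * (a + t\<^sup>2 * b))) has_real_derivative x / (a + x\<^sup>2 * b)\<^sup>2) (at x)" for x
  proof -
    have "x / D\<^sup>2 = 4 * (b * (x * b)) / (2 * b * D)\<^sup>2" if "D > 0" for D
      using that \<open>b > 0\<close> by (simp add: power_mult_distrib field_simps power2_eq_square)
    then show ?thesis
      using assms quadratic_denominator_pos[of a b x]
      by (intro derivative_eq_intros refl) (auto simp: power2_eq_square)
  qed
  have "Jint 1 2 a b = - 1 / (2 * b * (a + 1\<^sup>2 * b)) - - 1 / (2 * b * (a + 0\<^sup>2 * b))"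
    unfolding Jint_def power_one_right
    by (rule integral_eq_antiderivative_diff[where F = "\<lambda>t. - 1 / (2 * b * (a + t\<^sup>2 * b))"]) (use deriv in auto)
  also have "\<dots> = 1 / (2 * b * a) - 1 / (2 * b * (a + b))"
    by simp
  also have "\<dots> = X2 a b"
  proof -
    have "1 / (2 * b * a) - 1 / (2 * b * c) = 1 / (2 * a * c)" if "c > 0" "c - a = b" for c
    proof -
      have "1 / (2 * b * a) - 1 / (2 * b * c) = (c - a) / (2 * b * a * c)"
        using that(1) assms by (simp add: field_simps)
      also have "\<dots> = 1 / (2 * a * c)"
        by (subst that(2)) (use that(1) assms in \<open>simp add: field_simps\<close>)
      finally show ?thesis .
    qed
    then show ?thesis
      using assms by (simp add: X2_def)
  qed
  finally show ?thesis ..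
qed

lemma Xn_eq_Jint:
  assumes "n \<ge> 1" "a > 0" "b > 0"
  shows "Xn n a b = fact (n - 1) * Jint (n - 1) n a b"
proof (cases "odd n")
  case True
  then obtain k where n: "n = 2 * k + 1"
    by (auto elim: oddE)
  have "Xn n a b = (pda ^^ k) ((pdb ^^ k) X1) a b"
    by (simp add: Xn_def n)
  also have "\<dots> = pochhammer 1 (2 * k) * Jint (0 + 2 * k) (1 + 2 * k) a b"
    using mixed_partials_Jint[OF X1_eq_Jint, of a b k] assms(2,3) by simp
  finally show ?thesis
    by (simp add: n pochhammer_fact)
next
  case False
  then obtain j where "n = 2 * j"
    by (auto elim: evenE)
  with \<open>n \<ge> 1\<close> obtain k where n: "n = 2 * k + 2"
    by (cases j) auto
  have "Xn n a b = (pda ^^ k) ((pdb ^^ k) X2) a b"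
    by (simp add: Xn_def n)
  also have "\<dots> = pochhammer 2 (2 * k) * Jint (1 + 2 * k) (2 + 2 * k) a b"
    using mixed_partials_Jint[OF X2_eq_Jint, of a b k] assms(2,3) by simp
  also have "pochhammer 2 (2 * k) = (fact (2 * k + 1) :: real)"
    using pochhammer_rec[of "1::real" "2 * k"] by (simp add: pochhammer_fact one_add_one)
  finally show ?thesis
    by (simp add: n add.commute)
qed

lemma has_real_derivative_quotient_power:
  assumes N: "(N has_real_derivative N') (at x)" and g: "(g has_real_derivative g') (at x)" and g_pos: "g x > 0"
  shows "((\<lambda>s. N s / g s ^ q) has_real_derivative N' / g x ^ q - real q * N x * g' / g x ^ Suc q) (at x)"
proof -
  have "((\<lambda>s. N s * (1 / g s ^ q)) has_real_derivative N' * (1 / g x ^ q) + (- real q * 1 * g' / g x ^ Suc q) * N x) (at x)"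
    by (rule DERIV_mult[OF N has_real_derivative_divide_power[OF g g_pos]])
  then show ?thesis
    by (simp add: field_simps)
qed

lemma Jint_recurrence_antiderivative:
  fixes a b t :: real
  assumes "a > 0" "b > 0"
  defines "D \<equiv> a + t\<^sup>2 * b"
  shows "((\<lambda>s. s ^ (k + 1) * (b * s\<^sup>2 - a) / (a + s\<^sup>2 * b) ^ (k + 2)) has_real_derivative
           4 * a * b * real (k + 2) * (t ^ (k + 2) / D ^ (k + 3)) - real (k + 1) * (t ^ k / D ^ (k + 1))) (at t)"
proof -
  have D_pos: "D > 0"
    using quadratic_denominator_pos[of a b t] assms by (simp add: D_def)
  have "((\<lambda>s. s ^ (k + 1) * (b * s\<^sup>2 - a)) has_real_derivative
      real (k + 1) * t ^ k * (b * t\<^sup>2 - a) + t ^ (k + 1) * (2 * b * t)) (at t)"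
  proof -
    have power_deriv: "t * (real n * t ^ (n - Suc 0)) = real n * t ^ n" for n
      by (cases n) auto
    show ?thesis
      by (auto intro!: derivative_eq_intros simp: algebra_simps power2_eq_square power_deriv)
  qed
  moreover have "((\<lambda>s. a + s\<^sup>2 * b) has_real_derivative 2 * b * t) (at t)"
    by (auto intro!: derivative_eq_intros)
  ultimately have "((\<lambda>s. s ^ (k + 1) * (b * s\<^sup>2 - a) / (a + s\<^sup>2 * b) ^ (k + 2)) has_real_derivative
      (real (k + 1) * t ^ k * (b * t\<^sup>2 - a) + t ^ (k + 1) * (2 * b * t)) / D ^ (k + 2)
      - real (k + 2) * (t ^ (k + 1) * (b * t\<^sup>2 - a)) * (2 * b * t) / D ^ Suc (k + 2)) (at t)"
    unfolding D_def by (rule has_real_derivative_quotient_power) (use D_pos in \<open>simp add: D_def\<close>)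
  moreover have "(real (k + 1) * t ^ k * (b * t\<^sup>2 - a) + t ^ (k + 1) * (2 * b * t)) / D ^ (k + 2)
      - real (k + 2) * (t ^ (k + 1) * (b * t\<^sup>2 - a)) * (2 * b * t) / D ^ Suc (k + 2)
      = 4 * a * b * real (k + 2) * (t ^ (k + 2) / D ^ (k + 3)) - real (k + 1) * (t ^ k / D ^ (k + 1))"
  proof -
    define P where "P = t ^ k"
    define E where "E = D ^ (k + 1)"
    have E_pos: "E > 0"
      using D_pos by (simp add: E_def)
    have powers: "t ^ (k + 1) = P * t" "t ^ (k + 2) = P * t\<^sup>2" "D ^ (k + 2) = E * D"
        "D ^ Suc (k + 2) = E * D * D" "D ^ (k + 3) = E * D * D"
      by (simp_all add: P_def E_def power_add power2_eq_square power3_eq_cube)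
    have "(real (k + 1) * P * (b * t\<^sup>2 - a) + P * t * (2 * b * t)) * D - real (k + 2) * (P * t * (b * t\<^sup>2 - a)) * (2 * b * t)
        = 4 * a * b * real (k + 2) * (P * t\<^sup>2) - real (k + 1) * P * (D * D)"
      unfolding D_def by (simp add: algebra_simps power2_eq_square)
    moreover have "(real (k + 1) * P * (b * t\<^sup>2 - a) + P * t * (2 * b * t)) / (E * D) - real (k + 2) * (P * t * (b * t\<^sup>2 - a)) * (2 * b * t) / (E * D * D)
        = ((real (k + 1) * P * (b * t\<^sup>2 - a) + P * t * (2 * b * t)) * D - real (k + 2) * (P * t * (b * t\<^sup>2 - a)) * (2 * b * t)) / (E * D * D)"
      using D_pos E_pos by (simp add: field_simps)
    moreover have "4 * a * b * real (k + 2) * (P * t\<^sup>2 / (E * D * D)) - real (k + 1) * (P / E)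
        = (4 * a * b * real (k + 2) * (P * t\<^sup>2) - real (k + 1) * P * (D * D)) / (E * D * D)"
      using D_pos E_pos by (simp add: field_simps)
    ultimately show ?thesis
      unfolding powers E_def[symmetric] P_def[symmetric] by simp
  qed
  ultimately show ?thesis
    by (simp only:)
qed

lemma Jint_recurrence:
  assumes "a > 0" "b > 0"
  shows "4 * a * b * real (k + 2) * Jint (k + 2) (k + 3) a b = real (k + 1) * Jint k (k + 1) a b + (b - a) / (a + b) ^ (k + 2)"
proof -
  let ?f = "\<lambda>t. 4 * a * b * real (k + 2) * (t ^ (k + 2) / (a + t\<^sup>2 * b) ^ (k + 3)) - real (k + 1) * (t ^ k / (a + t\<^sup>2 * b) ^ (k + 1))"
  have "(\<lambda>t. t ^ p / (a + t\<^sup>2 * b) ^ q) integrable_on {0..1}" for p q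
    using assms by (intro Jint_integrand_integrable) auto
  then have "integral {0..1} ?f = 4 * a * b * real (k + 2) * Jint (k + 2) (k + 3) a b - real (k + 1) * Jint k (k + 1) a b"
    unfolding Jint_def by (simp only: integral_diff integrable_on_mult_right integral_mult_right)
  moreover have "integral {0..1} ?f = (b - a) / (a + b) ^ (k + 2)"
    using integral_eq_antiderivative_diff[OF _ Jint_recurrence_antiderivative[OF assms]] by simp
  ultimately show ?thesis
    by simp
qed

lemma dfact_nonpos: "k \<le> 0 \<Longrightarrow> dfact k = 1"
  by (subst dfact.simps) simp

lemma dfact_pos: "dfact k > 0"
proof (induction k rule: dfact.induct)
  case (1 k)
  then show ?case
    by (subst dfact.simps) simp
qed

lemma dfact_add_2: "m + 2 > 0 \<Longrightarrow> real (dfact (m + 2)) = of_int (m + 2) * real (dfact m)"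
  by (subst dfact.simps) simp

lemma dfact_le_1: "i \<le> 1 \<Longrightarrow> dfact (int i) = 1"
  using dfact_add_2[of "-1"] by (cases i) (auto simp: dfact_nonpos)

text \<open>The hypothesis \<open>i \<le> 1\<close> makes the prefactor 1 at \<open>k = 0\<close>, since (-1)!! = 0!! = 1!! = 1.\<close>

lemma two_step_recurrence_closed_form:
  fixes y e :: "nat \<Rightarrow> real" and c :: real
  assumes "c \<noteq> 0" and rec: "\<And>n. c * real (n + 2) * y (n + 2) = real (n + 1) * y n + e (n + 2)" and "i \<le> 1"
  shows "y (2 * k + i) = real (dfact (2 * int k + int i - 1)) / (real (dfact (2 * int k + int i)) * c ^ k)
           * (y i + (\<Sum>j = 1..k. real (dfact (2 * int j + int i - 2)) * c ^ (j - 1) * e (2 * j + i)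
                                  / real (dfact (2 * int j + int i - 1))))"
proof (induction k)
  case 0
  then show ?case
    using \<open>i \<le> 1\<close> by (simp add: dfact_nonpos dfact_le_1)
next
  case (Suc k)
  define n where "n = 2 * k + i"
  define S where "S = y i + (\<Sum>j = 1..k. real (dfact (2 * int j + int i - 2)) * c ^ (j - 1) * e (2 * j + i)
                                  / real (dfact (2 * int j + int i - 1)))"
  define u where "u = real (dfact (int n - 1))"
  define v where "v = real (dfact (int n))"
  have uv_pos: "u > 0" "v > 0"
    using dfact_pos by (simp_all add: u_def v_def)
  have IH: "y n = u / (v * c ^ k) * S"
    using Suc.IH by (simp add: n_def u_def v_def S_def)
  have "c * real (n + 2) \<noteq> 0"
    using \<open>c \<noteq> 0\<close> by simp
  then have step: "y (n + 2) = (real (n + 1) * y n + e (n + 2)) / (c * real (n + 2))"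
    by (subst nonzero_eq_divide_eq) (use rec[of n] in \<open>simp_all add: mult.commute\<close>)
  have idx: "2 * int (Suc k) + int i = int n + 2" "2 * Suc k + i = n + 2" "Suc k - 1 = k"
    by (simp_all add: n_def)
  have dfact_next: "real (dfact (int n + 2 - 1)) = real (n + 1) * u"
      "real (dfact (int n + 2)) = real (n + 2) * v" "real (dfact (int n + 2 - 2)) = v"
    using dfact_add_2[of "int n - 1"] dfact_add_2[of "int n"] by (simp_all add: u_def v_def ac_simps)
  have "y (n + 2) = real (n + 1) * u / (real (n + 2) * v * c ^ Suc k) * (S + v * c ^ k * e (n + 2) / (real (n + 1) * u))"
  proof -
    have "p * u / (q * v * c ^ Suc k) * (S + v * c ^ k * e (n + 2) / (p * u)) = (p * (u / (v * c ^ k) * S) + e (n + 2)) / (c * q)"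
      if "p > 0" "q > 0" for p q :: real
      using that \<open>c \<noteq> 0\<close> uv_pos by (simp add: field_simps)
    then show ?thesis
      unfolding step IH by simp
  qed
  then show ?case
    unfolding idx sum.cl_ivl_Suc dfact_next by (simp add: S_def add.assoc)
qed

lemma Jint_closed_form:
  assumes "a > 0" "b > 0" "i \<le> 1"
  shows "Jint (2 * k + i) (2 * k + i + 1) a b
    = real (dfact (2 * int k + int i - 1)) / (real (dfact (2 * int k + int i)) * (4 * a * b) ^ k)
      * (Jint i (i + 1) a b + (\<Sum>j = 1..k. real (dfact (2 * int j + int i - 2)) * (4 * a * b) ^ (j - 1)
            * ((b - a) / (a + b) ^ (2 * j + i)) / real (dfact (2 * int j + int i - 1))))"
proof -
  have rec: "4 * a * b * real (n + 2) * Jint (n + 2) (n + 2 + 1) a b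
      = real (n + 1) * Jint n (n + 1) a b + (b - a) / (a + b) ^ (n + 2)" for n
    using Jint_recurrence[OF assms(1,2), of n] by (simp add: numeral_3_eq_3)
  show ?thesis
    using two_step_recurrence_closed_form[where y = "\<lambda>n. Jint n (n + 1) a b" and c = "4 * a * b"
        and e = "\<lambda>n. (b - a) / (a + b) ^ n", OF _ rec \<open>i \<le> 1\<close>, of k] assms(1,2)
    by simp
qed

lemma Xn_odd_closed_form:
  assumes "m \<ge> 1" "a > 0" "b > 0"
  shows "Xn (2 * m - 1) a b =
        fact (2*m - 2) * real (dfact (2 * int m - 3))
          / (real (dfact (2 * int m - 2)) * (2^2 * a * b) ^ (m - 1))
        * (arctan (sqrt (b / a)) / sqrt (a * b)
           + (\<Sum>k = 1..m - 1. real (dfact (2 * int k - 2)) * (b - a) * (2^2 * a * b) ^ (k - 1)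
                / (real (dfact (2 * int k - 1)) * (a + b) ^ (2*k))))"
proof -
  obtain k where m: "m = Suc k"
    using \<open>m \<ge> 1\<close> by (cases m) auto
  have "Xn (2 * m - 1) a b = fact (2 * k) * Jint (2 * k + 0) (2 * k + 0 + 1) a b"
    using Xn_eq_Jint[of "2 * m - 1"] assms by (simp add: m)
  also have "\<dots> = fact (2 * k) * (real (dfact (2 * int k - 1)) / (real (dfact (2 * int k)) * (4 * a * b) ^ k)
      * (X1 a b + (\<Sum>j = 1..k. real (dfact (2 * int j - 2)) * (b - a) * (4 * a * b) ^ (j - 1)
            / (real (dfact (2 * int j - 1)) * (a + b) ^ (2 * j)))))"
    unfolding Jint_closed_form[OF assms(2,3) le0] X1_eq_Jint[OF assms(2,3)]
    by (simp add: mult_ac divide_inverse)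
  finally show ?thesis
    by (simp add: m X1_def)
qed

lemma Xn_even_closed_form:
  assumes "m \<ge> 2" "a > 0" "b > 0"
  shows "Xn (2 * m - 2) a b =
        fact (2*m - 3) * real (dfact (2 * int m - 4))
          / (real (dfact (2 * int m - 3)) * (2^2 * a * b) ^ (m - 2))
        * (1 / (2 * a * (a + b))
           + (\<Sum>k = 2..m - 1. real (dfact (2 * int k - 3)) * (b - a) * (2^2 * a * b) ^ (k - 2)
                / (real (dfact (2 * int k - 2)) * (a + b) ^ (2*k - 1))))"
proof -
  obtain k where m: "m = Suc (Suc k)"
    using \<open>m \<ge> 2\<close> by (metis add_2_eq_Suc le_Suc_ex)
  have "Xn (2 * m - 2) a b = fact (2 * k + 1) * Jint (2 * k + 1) (2 * k + 1 + 1) a b"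
    using Xn_eq_Jint[of "2 * m - 2"] assms by (simp add: m)
  also have "\<dots> = fact (2 * k + 1) * (real (dfact (2 * int k)) / (real (dfact (2 * int k + 1)) * (4 * a * b) ^ k)
      * (X2 a b + (\<Sum>j = 1..k. real (dfact (2 * int j - 1)) * (b - a) * (4 * a * b) ^ (j - 1)
            / (real (dfact (2 * int j)) * (a + b) ^ (2 * j + 1)))))"
    unfolding Jint_closed_form[OF assms(2,3) order_refl] one_add_one X2_eq_Jint[OF assms(2,3)]
    by (simp add: mult_ac divide_inverse)
  also have "(\<Sum>j = 1..k. real (dfact (2 * int j - 1)) * (b - a) * (4 * a * b) ^ (j - 1)
            / (real (dfact (2 * int j)) * (a + b) ^ (2 * j + 1)))
      = (\<Sum>j = 2..k + 1. real (dfact (2 * int j - 3)) * (b - a) * (4 * a * b) ^ (j - 2)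
            / (real (dfact (2 * int j - 2)) * (a + b) ^ (2 * j - 1)))"
  proof -
    have bounds: "{2..k + 1} = {Suc 1..Suc k}"
      by simp
    have "2 * int (Suc j) - 3 = 2 * int j - 1" "2 * int (Suc j) - 2 = 2 * int j"
        "Suc j - 2 = j - 1" "2 * Suc j - 1 = 2 * j + 1" for j
      by simp_all
    then show ?thesis
      unfolding bounds sum.shift_bounds_cl_Suc_ivl by (simp only:)
  qed
  finally have "Xn (2 * m - 2) a b = fact (2 * k + 1) * (real (dfact (2 * int k)) / (real (dfact (2 * int k + 1)) * (4 * a * b) ^ k)
      * (X2 a b + (\<Sum>j = 2..k + 1. real (dfact (2 * int j - 3)) * (b - a) * (4 * a * b) ^ (j - 2)
            / (real (dfact (2 * int j - 2)) * (a + b) ^ (2 * j - 1)))))" .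
  moreover have "2 * m - 3 = 2 * k + 1" "2 * int m - 4 = 2 * int k" "2 * int m - 3 = 2 * int k + 1"
      "m - 2 = k" "m - 1 = k + 1" "(2::real) ^ 2 = 4"
    by (simp_all add: m)
  ultimately show ?thesis
    unfolding X2_def by (simp only: times_divide_eq_right times_divide_eq_left mult.assoc)
qed

lemma fint_eq_Xn:
  assumes "n \<ge> 1" "r > \<bar>y\<bar>"
  shows "fint n r y = 2 ^ n / fact (n - 1) * Xn n (r - y) (r + y)"
proof -
  have "fint n r y = 2 ^ n * Jint (n - 1) n (r - y) (r + y)"
    unfolding fint_def Jint_def by (simp add: integral_mult_right[symmetric] del: integral_mult_right)
  then show ?thesis
    using Xn_eq_Jint[of n "r - y" "r + y"] assms by simp
qed

lemma fint_odd_closed_form: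
  assumes "m \<ge> 1" "r > \<bar>y\<bar>"
  shows "fint (2 * m - 1) r y =
           real (dfact (2 * int m - 3))
             / (real (dfact (2 * int m - 2)) * (r\<^sup>2 - y\<^sup>2) ^ (m - 1))
           * (2 * arctan (sqrt ((r + y) / (r - y))) / sqrt (r\<^sup>2 - y\<^sup>2)
              + (\<Sum>k = 1..m - 1. real (dfact (2 * int k - 2)) * y * (r\<^sup>2 - y\<^sup>2) ^ (k - 1)
                   / (real (dfact (2 * int k - 1)) * r ^ (2*k))))"
proof -
  define a b c where "a = r - y" and "b = r + y" and "c = r\<^sup>2 - y\<^sup>2"
  have a: "a > 0" and b: "b > 0" and r: "r > 0"
    using assms(2) by (auto simp: a_def b_def)
  have ab: "a * b = c" and apb: "a + b = 2 * r" and bma: "b - a = 2 * y"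
    by (simp_all add: a_def b_def c_def algebra_simps power2_eq_square)
  have c: "c > 0"
    using a b ab by (metis mult_pos_pos)
  let ?u = "real (dfact (2 * int m - 3))" and ?v = "real (dfact (2 * int m - 2))"
  let ?T = "\<lambda>j. real (dfact (2 * int j - 2)) * (b - a) * (2\<^sup>2 * a * b) ^ (j - 1) / (real (dfact (2 * int j - 1)) * (a + b) ^ (2 * j))"
  let ?S = "X1 a b + (\<Sum>j = 1..m - 1. ?T j)"
  have "fint (2 * m - 1) r y = 2 ^ (2 * m - 1) / fact (2 * m - 1 - 1) * Xn (2 * m - 1) a b"
    unfolding a_def b_def using assms by (intro fint_eq_Xn) auto
  also have "\<dots> = 2 ^ (2 * m - 1) / fact (2 * m - 2) * (fact (2 * m - 2) * ?u / (?v * (2\<^sup>2 * a * b) ^ (m - 1)) * ?S)"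
    unfolding Xn_odd_closed_form[OF assms(1) a b] X1_def[symmetric] by (simp only: diff_diff_left one_add_one)
  also have "\<dots> = ?u / (?v * c ^ (m - 1)) * (2 * ?S)"
  proof -
    have "(2::real) ^ (2 * m - 1) = 2 * 4 ^ (m - 1)"
      using \<open>m \<ge> 1\<close> by (cases m) (simp_all add: power_mult)
    moreover have "(2\<^sup>2 * a * b) ^ (m - 1) = 4 ^ (m - 1) * c ^ (m - 1)"
      by (simp add: mult.assoc ab power_mult_distrib)
    moreover have "2 * Q / F * (F * u / (v * (Q * C)) * S) = u / (v * C) * (2 * S)"
      if "F \<noteq> 0" "Q \<noteq> 0" "C \<noteq> 0" "v \<noteq> 0" for Q F C u v S :: real
      using that by (simp add: field_simps)
    ultimately show ?thesis
      using c dfact_pos[of "2 * int m - 2"] by simp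
  qed
  also have "2 * ?S = 2 * arctan (sqrt ((r + y) / (r - y))) / sqrt c
      + (\<Sum>j = 1..m - 1. real (dfact (2 * int j - 2)) * y * c ^ (j - 1) / (real (dfact (2 * int j - 1)) * r ^ (2 * j)))"
  proof -
    have "2 * X1 a b = 2 * arctan (sqrt ((r + y) / (r - y))) / sqrt c"
      unfolding X1_def ab by (simp add: a_def b_def)
    moreover have "2 * ?T j = real (dfact (2 * int j - 2)) * y * c ^ (j - 1) / (real (dfact (2 * int j - 1)) * r ^ (2 * j))"
      if j_range: "j \<in> {1..m - 1}" for j
    proof -
      obtain i where j: "j = Suc i"
        using j_range by (cases j) auto
      have "(2\<^sup>2 * a * b) ^ (j - 1) = 4 ^ i * c ^ i" and "(a + b) ^ (2 * j) = 4 * 4 ^ i * r ^ (2 * j)"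
        by (simp_all add: j apb power_mult_distrib power_mult mult.assoc ab)
      then show ?thesis
        using dfact_pos[of "2 * int j - 1"] r by (simp add: bma j field_simps)
    qed
    ultimately show ?thesis
      by (simp add: distrib_left sum_distrib_left)
  qed
  finally show ?thesis
    unfolding c_def[symmetric] .
qed

lemma fint_even_closed_form:
  assumes "m \<ge> 2" "r > \<bar>y\<bar>"
  shows "fint (2 * m - 2) r y =
           real (dfact (2 * int m - 4))
             / (real (dfact (2 * int m - 3)) * (r\<^sup>2 - y\<^sup>2) ^ (m - 1))
           * (1 + (\<Sum>k = 1..m - 1. real (dfact (2 * int k - 3)) * y * (r\<^sup>2 - y\<^sup>2) ^ (k - 1)
                   / (real (dfact (2 * int k - 2)) * r ^ (2*k - 1))))"
proof -
  define a b c where "a = r - y" and "b = r + y" and "c = r\<^sup>2 - y\<^sup>2"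
  have a: "a > 0" and b: "b > 0" and r: "r > 0"
    using assms(2) by (auto simp: a_def b_def)
  have ab: "a * b = c" and apb: "a + b = 2 * r" and bma: "b - a = 2 * y"
    by (simp_all add: a_def b_def c_def algebra_simps power2_eq_square)
  have c: "c > 0"
    using a b ab by (metis mult_pos_pos)
  obtain k where m: "m = k + 2"
    using \<open>m \<ge> 2\<close> by (metis le_add_diff_inverse2)
  let ?u = "real (dfact (2 * int m - 4))" and ?v = "real (dfact (2 * int m - 3))"
  let ?T = "\<lambda>j. real (dfact (2 * int j - 3)) * (b - a) * (2\<^sup>2 * a * b) ^ (j - 2) / (real (dfact (2 * int j - 2)) * (a + b) ^ (2 * j - 1))"
  let ?E = "\<lambda>j. real (dfact (2 * int j - 3)) * y * c ^ (j - 1) / (real (dfact (2 * int j - 2)) * r ^ (2 * j - 1))"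
  let ?S = "X2 a b + (\<Sum>j = 2..m - 1. ?T j)"
  have "fint (2 * m - 2) r y = 2 ^ (2 * m - 2) / fact (2 * m - 2 - 1) * Xn (2 * m - 2) a b"
    unfolding a_def b_def using assms by (intro fint_eq_Xn) auto
  also have "2 * m - 2 - 1 = 2 * m - 3"
    by simp
  also have "2 ^ (2 * m - 2) / fact (2 * m - 3) * Xn (2 * m - 2) a b
      = 2 ^ (2 * m - 2) / fact (2 * m - 3) * (fact (2 * m - 3) * ?u / (?v * (2\<^sup>2 * a * b) ^ (m - 2)) * ?S)"
    unfolding Xn_even_closed_form[OF assms(1) a b] X2_def[symmetric] ..
  also have "\<dots> = ?u / (?v * c ^ (m - 1)) * (4 * c * ?S)"
  proof -
    have "(2::real) ^ (2 * m - 2) = 4 * 4 ^ (m - 2)"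
      by (simp add: m power_add power_mult)
    moreover have "(2\<^sup>2 * a * b) ^ (m - 2) = 4 ^ (m - 2) * c ^ (m - 2)" and "c ^ (m - 1) = c * c ^ (m - 2)"
      by (simp_all add: m mult.assoc ab power_mult_distrib)
    moreover have "4 * Q / F * (F * u / (v * (Q * C)) * S) = u / (v * (c * C)) * (4 * c * S)"
      if "F \<noteq> 0" "Q \<noteq> 0" "C \<noteq> 0" "v \<noteq> 0" for Q F C u v S :: real
      using that c by (simp add: field_simps)
    ultimately show ?thesis
      using c dfact_pos[of "2 * int m - 3"] by simp
  qed
  also have "4 * c * ?S = 1 + (\<Sum>j = 1..m - 1. ?E j)"
  proof -
    have "4 * c * X2 a b = 1 + ?E 1"
    proof -
      have "4 * c * X2 a b = b / r"
        unfolding X2_def ab[symmetric] apb using a r by (simp add: field_simps)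
      then show ?thesis
        using r by (simp add: b_def dfact_nonpos field_simps)
    qed
    moreover have "4 * c * ?T j = ?E j" if j_range: "j \<in> {2..m - 1}" for j
    proof -
      obtain i where j: "j = i + 2"
        using j_range by (metis atLeastAtMost_iff le_add_diff_inverse2)
      have "2 * j - 1 = 2 * i + 3"
        by (simp add: j)
      then have "(2\<^sup>2 * a * b) ^ (j - 2) = 4 ^ i * c ^ i" and "(a + b) ^ (2 * j - 1) = 8 * 4 ^ i * r ^ (2 * j - 1)"
        and "c ^ (j - 1) = c * c ^ i"
        by (simp_all add: j apb power_mult_distrib power_add power_mult mult.assoc ab)
      then show ?thesis
        using dfact_pos[of "2 * int j - 2"] r by (simp add: bma j field_simps)
    qed
    moreover have "(\<Sum>j = 1..m - 1. ?E j) = ?E 1 + (\<Sum>j = 2..m - 1. ?E j)"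
      using \<open>m \<ge> 2\<close> by (simp add: sum.atLeast_Suc_atMost numeral_2_eq_2)
    ultimately show ?thesis
      by (simp add: distrib_left sum_distrib_left)
  qed
  finally show ?thesis
    unfolding c_def[symmetric] .
qed

theorem mainTheorem2:
  fixes n :: nat and a b :: real
  assumes "n \<ge> 1" and "a > 0" and "b > 0"
  shows
   "(\<forall>m::nat. m \<ge> 1 \<and> n = 2*m - 1 \<longrightarrow>
      Xn n a b =
        fact (2*m - 2) * real (dfact (2 * int m - 3))
          / (real (dfact (2 * int m - 2)) * (2^2 * a * b) ^ (m - 1))
        * (arctan (sqrt (b / a)) / sqrt (a * b)
           + (\<Sum>k = 1..m - 1. real (dfact (2 * int k - 2)) * (b - a) * (2^2 * a * b) ^ (k - 1)
                / (real (dfact (2 * int k - 1)) * (a + b) ^ (2*k)))))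
  \<and> (\<forall>m::nat. m \<ge> 2 \<and> n = 2*m - 2 \<longrightarrow>
      Xn n a b =
        fact (2*m - 3) * real (dfact (2 * int m - 4))
          / (real (dfact (2 * int m - 3)) * (2^2 * a * b) ^ (m - 2))
        * (1 / (2 * a * (a + b))
           + (\<Sum>k = 2..m - 1. real (dfact (2 * int k - 3)) * (b - a) * (2^2 * a * b) ^ (k - 2)
                / (real (dfact (2 * int k - 2)) * (a + b) ^ (2*k - 1)))))
  \<and> (\<forall>(x :: nat \<Rightarrow> real) (r :: real).
      r = sqrt (\<Sum>j = 1..n + 1. (x j)\<^sup>2) \<and> r > \<bar>x (n + 1)\<bar> \<longrightarrow>
      (\<forall>m::nat. m \<ge> 1 \<and> n = 2*m - 1 \<longrightarrow>
         fint n r (x (n + 1)) =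
           real (dfact (2 * int m - 3))
             / (real (dfact (2 * int m - 2)) * (r\<^sup>2 - (x (2*m))\<^sup>2) ^ (m - 1))
           * (2 * arctan (sqrt ((r + x (2*m)) / (r - x (2*m)))) / sqrt (r\<^sup>2 - (x (2*m))\<^sup>2)
              + (\<Sum>k = 1..m - 1. real (dfact (2 * int k - 2)) * x (2*m) * (r\<^sup>2 - (x (2*m))\<^sup>2) ^ (k - 1)
                   / (real (dfact (2 * int k - 1)) * r ^ (2*k)))))
      \<and> (\<forall>m::nat. m \<ge> 2 \<and> n = 2*m - 2 \<longrightarrow>
         fint n r (x (n + 1)) =
           real (dfact (2 * int m - 4))
             / (real (dfact (2 * int m - 3)) * (r\<^sup>2 - (x (2*m - 1))\<^sup>2) ^ (m - 1))
           * (1 + (\<Sum>k = 1..m - 1. real (dfact (2 * int k - 3)) * x (2*m - 1) * (r\<^sup>2 - (x (2*m - 1))\<^sup>2) ^ (k - 1)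
                   / (real (dfact (2 * int k - 2)) * r ^ (2*k - 1))))))"
  apply (intro conjI allI impI; elim conjE)
  subgoal premises m for m
    unfolding m(2) by (rule Xn_odd_closed_form[OF m(1) assms(2,3)])
  subgoal premises m for m
    unfolding m(2) by (rule Xn_even_closed_form[OF m(1) assms(2,3)])
  subgoal premises hyp for x r m
  proof -
    have "n + 1 = 2 * m"
      using hyp by simp
    show ?thesis
      unfolding \<open>n + 1 = 2 * m\<close> unfolding hyp(4)
      by (rule fint_odd_closed_form[OF hyp(3)]) (use hyp(2) \<open>n + 1 = 2 * m\<close> in simp)
  qed
  subgoal premises hyp for x r m
  proof -
    have "n + 1 = 2 * m - 1"
      using hyp by simp
    show ?thesis
      unfolding \<open>n + 1 = 2 * m - 1\<close> unfolding hyp(4)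
      by (rule fint_even_closed_form[OF hyp(3)]) (use hyp(2) \<open>n + 1 = 2 * m - 1\<close> in simp)
  qed
  done

end
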